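(* Let $G=(\Gamma,s)$ be a connected rooted graph. If $s$ is not a cut vertex of $G$ (i.e. the graph obtained by deleting $s$ and its incident edges is connected), then the constant function $\mathbf 1:\tilde V\to\mathbb{N}$, $v\mapsto 1$, belongs to $\mathrm{PPF}(G)$. If $s$ is a cut vertex of $G$, then $\mathrm{PPF}(G)=\emptyset$.
   Context: $\mathbb{N}=\{1,2,\dots\}$. A rooted graph $G=(\Gamma,s)$ is a finite undirected multigraph without loops with a distinguished vertex $s$ (the sink); $V$ is its vertex set and $\tilde V=V\setminus\{s\}$. $\mathrm{mult}(vw)$ is the number of edges between $v,w$; for $A\subseteq V$, $\deg^A(v)=\sum_{w\in A}\mathrm{mult}(vw)$ and $\deg(v)=\deg^V(v)$. A $G$-parking function is a function $p:\tilde V\to\mathbb{N}$ such that for every nonempty $S\subseteq\tilde V$ there exists $v\in S$ with $p(v)\le\deg^{V\setminus S}(v)$; $\mathrm{PF}(G)$ is their set. For $A\subseteq\tilde V$, $G^A$ denotes the induced subgraph of $G$ on $A\cup\{s\}$, rooted at $s$ (possibly disconnected; the definition of $G^A$-parking function is the same). For an ordered pair $(A,B)$ of nonempty disjoint sets with $A\cup B=\tilde V$ and $p\in\mathrm{PF}(G)$, define $p^A:A\to\mathbb{N}$, $p^A(v)=p(v)$, and $p^B:B\to\mathbb{Z}$, $p^B(v)=p(v)-\deg^A(v)$. $p$ is decomposable with respect to $(A,B)$ if $p^A\in\mathrm{PF}(G^A)$ and $p^B\in\mathrm{PF}(G^B)$. $p\in\mathrm{PF}(G)$ is prime if there is no such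 $(A,B)$ with respect to which $p$ is decomposable; $\mathrm{PPF}(G)$ is the set of prime $G$-parking functions. *)

theory Defs
  imports Main
begin

definition rooted_graph :: "'a set \<Rightarrow> ('a \<Rightarrow> 'a \<Rightarrow> nat) \<Rightarrow> 'a \<Rightarrow> bool" where
  "rooted_graph V mult s \<longleftrightarrow> finite V \<and> s \<in> V \<and>
     (\<forall>v w. mult v w = mult w v) \<and> (\<forall>v. mult v v = 0) \<and>
     (\<forall>v w. 0 < mult v w \<longrightarrow> v \<in> V \<and> w \<in> V)"

definition connected_on :: "'a set \<Rightarrow> ('a \<Rightarrow> 'a \<Rightarrow> nat) \<Rightarrow> bool" where
  "connected_on U mult \<longleftrightarrow>
     (\<forall>v\<in>U. \<forall>w\<in>U. (v, w) \<in> {(x, y). x \<in> U \<and> y \<in> U \<and> 0 < mult x y}\<^sup>*)"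

definition deg_in :: "('a \<Rightarrow> 'a \<Rightarrow> nat) \<Rightarrow> 'a set \<Rightarrow> 'a \<Rightarrow> nat" where
  "deg_in mult A v = (\<Sum>w\<in>A. mult v w)"

definition induced_mult :: "('a \<Rightarrow> 'a \<Rightarrow> nat) \<Rightarrow> 'a set \<Rightarrow> 'a \<Rightarrow> 'a \<Rightarrow> nat" where
  "induced_mult mult U v w = (if v \<in> U \<and> w \<in> U then mult v w else 0)"

text \<open>A function p on the non-sink vertices is represented by
  a total function 'a => int whose values outside V - {s} are ignored; membership in
  PF requires values in N = {1,2,...} on V - {s}.\<close>
definition is_PF :: "'a set \<Rightarrow> ('a \<Rightarrow> 'a \<Rightarrow> nat) \<Rightarrow> 'a \<Rightarrow> ('a \<Rightarrow> int) \<Rightarrow> bool" where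
  "is_PF V mult s p \<longleftrightarrow> (\<forall>v\<in>V - {s}. 1 \<le> p v) \<and>
     (\<forall>S. S \<subseteq> V - {s} \<and> S \<noteq> {} \<longrightarrow>
        (\<exists>v\<in>S. p v \<le> int (deg_in mult (V - S) v)))"

definition decomposable :: "'a set \<Rightarrow> ('a \<Rightarrow> 'a \<Rightarrow> nat) \<Rightarrow> 'a \<Rightarrow> ('a \<Rightarrow> int) \<Rightarrow> 'a set \<Rightarrow> 'a set \<Rightarrow> bool" where
  "decomposable V mult s p A B \<longleftrightarrow>
     A \<noteq> {} \<and> B \<noteq> {} \<and> A \<inter> B = {} \<and> A \<union> B = V - {s} \<and>
     is_PF (A \<union> {s}) (induced_mult mult (A \<union> {s})) s p \<and>
     is_PF (B \<union> {s}) (induced_mult mult (B \<union> {s})) s (\<lambda>v. p v - int (deg_in mult A v))"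

definition is_PPF :: "'a set \<Rightarrow> ('a \<Rightarrow> 'a \<Rightarrow> nat) \<Rightarrow> 'a \<Rightarrow> ('a \<Rightarrow> int) \<Rightarrow> bool" where
  "is_PPF V mult s p \<longleftrightarrow> is_PF V mult s p \<and> \<not> (\<exists>A B. decomposable V mult s p A B)"

end

theory Submission
  imports Defs
begin

text \<open>If the non-sink vertices induce a connected graph, every bipartition \<open>(A, B)\<close> of them
  has a vertex of \<open>B\<close> adjacent to \<open>A\<close>; there \<open>1 - deg\<^sup>A\<close> drops below 1, so the constant
  function 1, which is a parking function because every nonempty set of non-sink vertices
  has an edge leaving it, cannot decompose. If they induce a disconnected graph, take \<open>A\<close>
  to be one connected component and \<open>B\<close> the rest: with no edges between \<open>A\<close> and \<open>B\<close>,
  \<open>p\<^sup>B = p\<close> and the parking conditions restrict to both sides, so every parking function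
  decomposes.\<close>

lemma rtrancl_exits_set:
  assumes "(v, w) \<in> {(x, y). x \<in> U \<and> y \<in> U \<and> 0 < mult x y}\<^sup>*" "v \<in> S" "w \<notin> S"
  shows "\<exists>x\<in>S. \<exists>y\<in>U - S. 0 < mult x y"
  using assms by (induction rule: rtrancl_induct) auto

lemma connected_on_edge_leaving:
  assumes "connected_on U mult" "S \<subseteq> U" "v \<in> S" "w \<in> U - S"
  shows "\<exists>x\<in>S. \<exists>y\<in>U - S. 0 < mult x y"
  using assms rtrancl_exits_set[of v w U mult S] unfolding connected_on_def by blast

lemma not_connected_on_split:
  assumes "\<not> connected_on U mult"
  obtains A B where "A \<noteq> {}" "B \<noteq> {}" "A \<inter> B = {}" "A \<union> B = U"
    and "\<And>a b. a \<in> A \<Longrightarrow> b \<in> B \<Longrightarrow> mult a b = 0"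
proof -
  let ?R = "{(x, y). x \<in> U \<and> y \<in> U \<and> 0 < mult x y}"
  obtain u w where uw: "u \<in> U" "w \<in> U" "(u, w) \<notin> ?R\<^sup>*"
    using assms unfolding connected_on_def by blast
  define A where "A = {x \<in> U. (u, x) \<in> ?R\<^sup>*}"
  have "mult a b = 0" if "a \<in> A" "b \<in> U - A" for a b
    using that unfolding A_def by (auto intro: rtrancl_into_rtrancl)
  moreover have "A \<noteq> {}" "U - A \<noteq> {}"
    using uw unfolding A_def by auto
  ultimately show thesis
    by (intro that[of A "U - A"]) (auto simp: A_def)
qed

lemma is_PF_cong:
  assumes "is_PF V m s p" "\<And>v. v \<in> V - {s} \<Longrightarrow> q v = p v"
  shows "is_PF V m s q"
  unfolding is_PF_def
proof (intro conjI allI impI ballI)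
  fix S assume S: "S \<subseteq> V - {s} \<and> S \<noteq> {}"
  then obtain v where "v \<in> S" "p v \<le> int (deg_in m (V - S) v)"
    using assms(1) unfolding is_PF_def by blast
  moreover have "q v = p v"
    using S \<open>v \<in> S\<close> assms(2) by blast
  ultimately show "\<exists>v\<in>S. q v \<le> int (deg_in m (V - S) v)"
    by (intro bexI[of _ v]) simp_all
qed (use assms in \<open>auto simp: is_PF_def\<close>)

lemma is_PF_restrict:
  assumes rg: "rooted_graph V mult s" and C: "C \<subseteq> V - {s}"
    and no_edge: "\<And>x y. x \<in> C \<Longrightarrow> y \<in> V - {s} - C \<Longrightarrow> mult x y = 0"
    and pf: "is_PF V mult s p"
  shows "is_PF (C \<union> {s}) (induced_mult mult (C \<union> {s})) s p"
  unfolding is_PF_def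
proof (intro conjI allI impI)
  show "\<forall>v\<in>C \<union> {s} - {s}. 1 \<le> p v"
    using pf C unfolding is_PF_def by auto
next
  fix S assume S: "S \<subseteq> C \<union> {s} - {s} \<and> S \<noteq> {}"
  then have "S \<subseteq> V - {s}" "S \<noteq> {}"
    using C by auto
  then obtain v where v: "v \<in> S" "p v \<le> int (deg_in mult (V - S) v)"
    using pf unfolding is_PF_def by blast
  have vC: "v \<in> C" using S v by auto
  have fin: "finite V" and sub: "C \<union> {s} - S \<subseteq> V - S"
    using C rg unfolding rooted_graph_def by auto
  have "deg_in mult (V - S) v = (\<Sum>w\<in>C \<union> {s} - S. mult v w)"
    unfolding deg_in_def
    by (rule sum.mono_neutral_right[OF _ sub]) (use fin in simp, use no_edge vC in blast)
  also have "\<dots> = deg_in (induced_mult mult (C \<union> {s})) (C \<union> {s} - S) v"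
    unfolding deg_in_def induced_mult_def using vC by (intro sum.cong) auto
  finally show "\<exists>v\<in>S. p v \<le> int (deg_in (induced_mult mult (C \<union> {s})) (C \<union> {s} - S) v)"
    using v by auto
qed

lemma is_PF_const_one:
  assumes "rooted_graph V mult s" "connected_on V mult"
  shows "is_PF V mult s (\<lambda>_. 1)"
  unfolding is_PF_def
proof (intro conjI allI impI ballI)
  fix S assume S: "S \<subseteq> V - {s} \<and> S \<noteq> {}"
  have fin: "finite V" and "s \<in> V - S"
    using assms(1) S unfolding rooted_graph_def by auto
  then obtain x y where "x \<in> S" "y \<in> V - S" "0 < mult x y"
    using connected_on_edge_leaving[OF assms(2), of S] S by blast
  moreover have "mult x y \<le> deg_in mult (V - S) x"
    unfolding deg_in_def by (rule member_le_sum) (use \<open>y \<in> V - S\<close> fin in auto)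
  ultimately show "\<exists>v\<in>S. (1::int) \<le> int (deg_in mult (V - S) v)"
    by force
qed simp

lemma decomposable_const_one_no_edge:
  assumes "rooted_graph V mult s" "decomposable V mult s (\<lambda>_. 1) A B" "a \<in> A" "b \<in> B"
  shows "mult b a = 0"
proof -
  have AB: "A \<union> B = V - {s}"
    and pf_B: "is_PF (B \<union> {s}) (induced_mult mult (B \<union> {s})) s (\<lambda>v. 1 - int (deg_in mult A v))"
    using assms(2) unfolding decomposable_def by auto
  have "finite A"
    using assms(1) AB unfolding rooted_graph_def by (auto intro: finite_subset)
  have "b \<in> B \<union> {s} - {s}"
    using assms(4) AB by auto
  then have "deg_in mult A b = 0"
    using pf_B unfolding is_PF_def by auto
  then show ?thesis
    using \<open>finite A\<close> assms(3) unfolding deg_in_def by simp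
qed

lemma is_PPF_const_one:
  assumes rg: "rooted_graph V mult s" and "connected_on V mult"
    and conn: "connected_on (V - {s}) mult"
  shows "is_PPF V mult s (\<lambda>_. 1)"
proof -
  have "\<not> decomposable V mult s (\<lambda>_. 1) A B" for A B
  proof
    assume d: "decomposable V mult s (\<lambda>_. 1) A B"
    then have AB: "A \<noteq> {}" "B \<noteq> {}" "A \<inter> B = {}" "A \<union> B = V - {s}"
      unfolding decomposable_def by auto
    then obtain a b where "a \<in> A" "b \<in> V - {s} - A"
      by blast
    then obtain x y where "x \<in> A" "y \<in> B" "0 < mult x y"
      using connected_on_edge_leaving[OF conn, of A a b] AB by blast
    moreover have "mult x y = mult y x"
      using rg unfolding rooted_graph_def by blast
    ultimately show False
      using decomposable_const_one_no_edge[OF rg d] by simp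
  qed
  then show ?thesis
    using is_PF_const_one[OF rg assms(2)] unfolding is_PPF_def by blast
qed

lemma is_PF_decomposable_of_split:
  assumes rg: "rooted_graph V mult s" and pf: "is_PF V mult s p"
    and AB: "A \<noteq> {}" "B \<noteq> {}" "A \<inter> B = {}" "A \<union> B = V - {s}"
    and no_edge: "\<And>a b. a \<in> A \<Longrightarrow> b \<in> B \<Longrightarrow> mult a b = 0"
  shows "decomposable V mult s p A B"
proof -
  have no_edge': "mult b a = 0" if "b \<in> B" "a \<in> A" for a b
    using rg no_edge[OF that(2,1)] unfolding rooted_graph_def by metis
  have "finite A"
    using rg AB(4) unfolding rooted_graph_def by (auto intro: finite_subset)
  then have deg_A: "deg_in mult A b = 0" if "b \<in> B" for b
    unfolding deg_in_def using no_edge' that by simp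
  have "is_PF (A \<union> {s}) (induced_mult mult (A \<union> {s})) s p"
    by (rule is_PF_restrict[OF rg _ _ pf]) (use AB no_edge in auto)
  moreover have "is_PF (B \<union> {s}) (induced_mult mult (B \<union> {s})) s p"
    by (rule is_PF_restrict[OF rg _ _ pf]) (use AB in blast, use AB no_edge' in blast)
  then have "is_PF (B \<union> {s}) (induced_mult mult (B \<union> {s})) s (\<lambda>v. p v - int (deg_in mult A v))"
    by (rule is_PF_cong) (simp add: deg_A)
  ultimately show ?thesis
    unfolding decomposable_def using AB by blast
qed

theorem proposition2p3:
  fixes V :: "'a set" and mult :: "'a \<Rightarrow> 'a \<Rightarrow> nat" and s :: 'a
  assumes "rooted_graph V mult s"
    and "connected_on V mult"
  shows "(connected_on (V - {s}) mult \<longrightarrow> is_PPF V mult s (\<lambda>_. 1))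
       \<and> (\<not> connected_on (V - {s}) mult \<longrightarrow> (\<forall>p. \<not> is_PPF V mult s p))"
proof (intro conjI impI allI)
  show "is_PPF V mult s (\<lambda>_. 1)" if "connected_on (V - {s}) mult"
    using is_PPF_const_one[OF assms that] .
next
  fix p assume "\<not> connected_on (V - {s}) mult"
  then obtain A B where split: "A \<noteq> {}" "B \<noteq> {}" "A \<inter> B = {}" "A \<union> B = V - {s}"
    and no_edge: "\<And>a b. a \<in> A \<Longrightarrow> b \<in> B \<Longrightarrow> mult a b = 0"
    by (rule not_connected_on_split) (rule that)
  have "decomposable V mult s p A B" if "is_PF V mult s p"
    using is_PF_decomposable_of_split[OF assms(1) that split no_edge] .
  then show "\<not> is_PPF V mult s p"
    unfolding is_PPF_def by blast
qed

end
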